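(* The sets $S^1_3$ and $T^1_3$ are finite, where $S^1_3=\{(k,a,b)\in(\mathbb{R}\setminus A_3)\times\mathbb{R}\times\mathbb{R}: \mathrm{rank}(A^{(k,a,b)}_3)\le1,\ 4a^3+27b^2=0\}\setminus\{(k,0,0):k\in\mathbb{R}\}$ and $T^1_3=\{(k,a,b)\in(\mathbb{R}\setminus C_3)\times\mathbb{R}\times\mathbb{R}: \mathrm{rank}(B^{(k,a,b)}_3)\le1,\ 4a^3+27b^2=0\}\setminus\{(k,0,0):k\in\mathbb{R}\}$.
   Context: For real $k,a,b$, the generalized $k$-FL sequence is $S^{(a,b)}_{k,0}=2b$, $S^{(a,b)}_{k,1}=bk+a$, $S^{(a,b)}_{k,n}=kS^{(a,b)}_{k,n-1}+S^{(a,b)}_{k,n-2}$. $A^{(k,a,b)}_3=\begin{pmatrix}S_1&S_2&S_3\\-S_3&S_1&S_2\\-S_2&-S_3&S_1\end{pmatrix}$ and $B^{(k,a,b)}_3=\begin{pmatrix}S_1&S_2&S_3\\S_3&S_1&S_2\\S_2&S_3&S_1\end{pmatrix}$ with $S_i=S^{(a,b)}_{k,i}$. Define $f_m,g_m\in\mathbb{Z}[T]$ by $f_0=0,f_1=1,g_0=2,g_1=T$, $f_m=Tf_{m-1}+f_{m-2}$, $g_m=Tg_{m-1}+g_{m-2}$; $F_n=f_{n+1}-f_n$, $G_n=g_{n+1}-g_n$, $P_n=f_{n+1}+f_n$, $Q_n=g_{n+1}+g_n$. $A_3=\{k: F_3(k)+1=0\text{ or }G_3(k)+k-2=0\}$ and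 $C_3=\{k: P_3(k)-1=0\text{ or }Q_3(k)-k-2=0\}$ (both contain $0$). The condition $4a^3+27b^2=0$ means the curve $y^2=x^3+ax+b$ is singular. *)

theory Defs
  imports "HOL-Analysis.Analysis"
begin

fun FLseq :: "real \<Rightarrow> real \<Rightarrow> real \<Rightarrow> nat \<Rightarrow> real" where
  "FLseq k a b 0 = 2 * b"
| "FLseq k a b (Suc 0) = b * k + a"
| "FLseq k a b (Suc (Suc n)) = k * FLseq k a b (Suc n) + FLseq k a b n"

fun fp :: "nat \<Rightarrow> int poly" where
  "fp 0 = 0"
| "fp (Suc 0) = 1"
| "fp (Suc (Suc m)) = [:0, 1:] * fp (Suc m) + fp m"

fun gp :: "nat \<Rightarrow> int poly" where
  "gp 0 = [:2:]"
| "gp (Suc 0) = [:0, 1:]"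
| "gp (Suc (Suc m)) = [:0, 1:] * gp (Suc m) + gp m"

definition Fp :: "nat \<Rightarrow> int poly" where "Fp n = fp (Suc n) - fp n"
definition Gp :: "nat \<Rightarrow> int poly" where "Gp n = gp (Suc n) - gp n"
definition Pp :: "nat \<Rightarrow> int poly" where "Pp n = fp (Suc n) + fp n"
definition Qp :: "nat \<Rightarrow> int poly" where "Qp n = gp (Suc n) + gp n"

definition evr :: "int poly \<Rightarrow> real \<Rightarrow> real" where
  "evr p x = poly (map_poly real_of_int p) x"

definition A3set :: "real set" where
  "A3set = {k. evr (Fp 3) k + 1 = 0 \<or> evr (Gp 3) k + k - 2 = 0}"

definition C3set :: "real set" where
  "C3set = {k. evr (Pp 3) k - 1 = 0 \<or> evr (Qp 3) k - k - 2 = 0}"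

definition mat3 :: "real \<Rightarrow> real \<Rightarrow> real \<Rightarrow> real \<Rightarrow> real \<Rightarrow> real \<Rightarrow> real \<Rightarrow> real \<Rightarrow> real
    \<Rightarrow> real^3^3" where
  "mat3 a11 a12 a13 a21 a22 a23 a31 a32 a33 =
     vector [vector [a11, a12, a13], vector [a21, a22, a23], vector [a31, a32, a33]]"

definition Amat3 :: "real \<Rightarrow> real \<Rightarrow> real \<Rightarrow> real^3^3" where
  "Amat3 k a b = (let S = FLseq k a b in
     mat3 (S 1) (S 2) (S 3)  (- S 3) (S 1) (S 2)  (- S 2) (- S 3) (S 1))"

definition Bmat3 :: "real \<Rightarrow> real \<Rightarrow> real \<Rightarrow> real^3^3" where
  "Bmat3 k a b = (let S = FLseq k a b in
     mat3 (S 1) (S 2) (S 3)  (S 3) (S 1) (S 2)  (S 2) (S 3) (S 1))"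

definition S13 :: "(real \<times> real \<times> real) set" where
  "S13 = {(k, a, b). k \<notin> A3set \<and> rank (Amat3 k a b) \<le> 1 \<and> 4 * a^3 + 27 * b^2 = 0}
          - {(k, 0, 0) | k. True}"

definition T13 :: "(real \<times> real \<times> real) set" where
  "T13 = {(k, a, b). k \<notin> C3set \<and> rank (Bmat3 k a b) \<le> 1 \<and> 4 * a^3 + 27 * b^2 = 0}
          - {(k, 0, 0) | k. True}"

end

theory Submission
  imports Defs
begin

text \<open>The first two rows of either matrix are \<open>(x, y, z)\<close> and \<open>(s z, x, y)\<close> with
  \<open>x, y, z = S\<^sub>1, S\<^sub>2, S\<^sub>3\<close> and \<open>s = -1\<close> for \<open>A\<^sub>3\<close>, \<open>s = 1\<close> for \<open>B\<^sub>3\<close>.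
  If the rank is at most one, their \<open>2 \<times> 2\<close> minors vanish, which gives
  \<open>x\<^sup>3 = s y\<^sup>3\<close>, hence \<open>y = s x\<close> and \<open>z = x\<close>. Since \<open>z = k y + x\<close>, either
  \<open>k = 0\<close> (excluded, as \<open>0 \<in> A\<^sub>3 \<inter> C\<^sub>3\<close>) or \<open>x = y = 0\<close>, which forces \<open>a = b = 0\<close>.\<close>

lemma rank_le_1_minor_eq_0:
  fixes M :: "real^'n^'m"
  assumes "rank M \<le> 1"
  shows "M$i$p * M$j$q - M$i$q * M$j$p = 0"
proof (rule ccontr)
  assume minor: "M$i$p * M$j$q - M$i$q * M$j$p \<noteq> 0"
  have row_j: "M$j \<noteq> 0" using minor by auto
  have not_multiple: "M$i \<notin> span {M$j}"
  proof
    assume "M$i \<in> span {M$j}"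
    then obtain c where "M$i = c *\<^sub>R M$j" by (auto simp: span_singleton)
    then show False using minor by (simp add: algebra_simps)
  qed
  then have distinct: "M$i \<noteq> M$j" by (metis span_base singletonI)
  have "independent {M$i, M$j}"
    by (rule independent_insertI[OF not_multiple]) (use row_j in \<open>simp add: independent_insert\<close>)
  then have "card {M$i, M$j} \<le> dim (rows M)"
    by (intro independent_card_le_dim) (auto simp: rows_def row_def)
  then have "2 \<le> rank M" using distinct by (simp add: row_rank_def)
  then show False using assms by simp
qed

lemma zero_mem_A3set: "0 \<in> A3set"
  by (simp add: A3set_def evr_def Fp_def Gp_def numeral_eq_Suc poly_0_coeff_0 coeff_map_poly)

lemma zero_mem_C3set: "0 \<in> C3set"
  by (simp add: C3set_def evr_def Pp_def Qp_def numeral_eq_Suc poly_0_coeff_0 coeff_map_poly)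

lemma twisted_rows_minors_eq_0:
  fixes s x y z :: real
  assumes s: "s\<^sup>2 = 1" and m1: "x * x = s * (y * z)" and m2: "y * y = z * x"
  shows "(x = 0 \<and> y = 0) \<or> (y = s * x \<and> z = x)"
proof (cases "x = 0")
  case True
  then show ?thesis using m2 by simp
next
  case False
  have "x ^ 3 = (s * y) ^ 3"
  proof -
    have "x ^ 3 = s * y * (z * x)" using m1 by (simp add: power3_eq_cube algebra_simps)
    also have "\<dots> = s * y ^ 3" using m2 by (simp add: power3_eq_cube algebra_simps)
    also have "\<dots> = (s * y) ^ 3" using s by (simp add: power3_eq_cube power2_eq_square algebra_simps)
    finally show ?thesis .
  qed
  then have y: "s * y = x" by (metis odd_real_root_power_cancel odd_numeral)
  then have "y = s * x" using s by (metis mult.assoc mult_1 power2_eq_square)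
  moreover have "x * x = x * z" using m1 y by (simp add: mult.assoc)
  then have "z = x" using False by simp
  ultimately show ?thesis by simp
qed

lemma FLseq_twisted_minors_eq_0:
  fixes s k a b :: real
  defines "S \<equiv> FLseq k a b"
  assumes s: "s\<^sup>2 = 1"
    and m1: "S 1 * S 1 = s * (S 2 * S 3)" and m2: "S 2 * S 2 = S 3 * S 1"
  shows "k = 0 \<or> (a = 0 \<and> b = 0)"
proof -
  have S: "S 1 = b * k + a" "S 2 = k * S 1 + 2 * b" "S 3 = k * S 2 + S 1"
    by (simp_all add: S_def numeral_eq_Suc)
  from twisted_rows_minors_eq_0[OF s m1 m2]
  consider "S 1 = 0" "S 2 = 0" | "S 2 = s * S 1" "S 3 = S 1" "S 1 \<noteq> 0"
    by (metis mult_zero_right)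
  then show ?thesis
  proof cases
    case 1
    then show ?thesis using S by simp
  next
    case 2
    then have "k * (s * S 1) = 0" using S(3) by simp
    then show ?thesis using 2 s by auto
  qed
qed

lemma Amat3_rank_le_1:
  assumes "rank (Amat3 k a b) \<le> 1"
  shows "k = 0 \<or> (a = 0 \<and> b = 0)"
proof (rule FLseq_twisted_minors_eq_0[where s = "-1"])
  have "\<And>p q. Amat3 k a b$1$p * Amat3 k a b$2$q - Amat3 k a b$1$q * Amat3 k a b$2$p = 0"
    using rank_le_1_minor_eq_0[OF assms] .
  from this[of 1 2] this[of 2 3]
  show "FLseq k a b 1 * FLseq k a b 1 = - 1 * (FLseq k a b 2 * FLseq k a b 3)"
    and "FLseq k a b 2 * FLseq k a b 2 = FLseq k a b 3 * FLseq k a b 1"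
    by (simp_all add: Amat3_def mat3_def Let_def algebra_simps del: FLseq.simps)
qed simp

lemma Bmat3_rank_le_1:
  assumes "rank (Bmat3 k a b) \<le> 1"
  shows "k = 0 \<or> (a = 0 \<and> b = 0)"
proof (rule FLseq_twisted_minors_eq_0[where s = 1])
  have "\<And>p q. Bmat3 k a b$1$p * Bmat3 k a b$2$q - Bmat3 k a b$1$q * Bmat3 k a b$2$p = 0"
    using rank_le_1_minor_eq_0[OF assms] .
  from this[of 1 2] this[of 2 3]
  show "FLseq k a b 1 * FLseq k a b 1 = 1 * (FLseq k a b 2 * FLseq k a b 3)"
    and "FLseq k a b 2 * FLseq k a b 2 = FLseq k a b 3 * FLseq k a b 1"
    by (simp_all add: Bmat3_def mat3_def Let_def algebra_simps del: FLseq.simps)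
qed simp

lemma S13_eq_empty: "S13 = {}"
  using Amat3_rank_le_1 zero_mem_A3set by (fastforce simp: S13_def)

lemma T13_eq_empty: "T13 = {}"
  using Bmat3_rank_le_1 zero_mem_C3set by (fastforce simp: T13_def)

theorem lemma4p10:
  shows "finite S13 \<and> finite T13"
  by (simp add: S13_eq_empty T13_eq_empty)

end
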